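(* Let $n,m\ge1$. An abstract simplicial complex $\mathcal I$ on the vertex set $\Omega$ is affinely implementable (i.e. $\mathcal I=\mathcal I(f)$ for some affine maximizer $f$) if and only if there is a regular subdivision $\mathcal S$ of $(\Delta_{n-1})^m$ such that $F$ is a facet of $\mathcal I$ if and only if $F$ is the vertex set of a maximal cell of $\mathcal S$.
   Context: There are $n$ players and $m$ items. The allocation space is $\Omega=\{A\in\{0,1\}^{n\times m}:\sum_{i\in[n]}A_{i,j}=1\ \forall j\in[m]\}$; row $A_i$ is the bundle of player $i$. $\Omega$ is identified with the vertex set of the product $(\Delta_{n-1})^m$ of $m$ copies of the $(n-1)$-dimensional standard simplex (each column of $A$ being a vertex of $\Delta_{n-1}$). Types: $\theta=(\theta_1,\dots,\theta_n)$ with $\theta_i\in\mathbb R^m$. An allocation function $f:\mathbb R^{n\times m}\to\Omega$ is an affine maximizer if there are nonzero player weights $w_1,\dots,w_n$ and allocation weights $c_A\in\mathbb R$ ($A\in\Omega$) with $f(\theta)\in\arg\max_{A\in\Omega}\{c_A+\sum_i w_i\,\theta_i\cdot A_i\}$ for all $\theta$. Difference sets $Q_A=\mathrm{cl}\{\theta:f(\theta)=A\}$; indifference complex $\mathcal I(f)=\{\mathcal O\subseteq\Omega:\bigcap_{A\in\mathcal O}Q_A\ne\emptyset\}$. Regular subdivision of a finite point set $U$: project the upper faces (outer normal with positive last coordinate) of $\mathrm{conv}\{(u,\lambda(u)):u\in U\}$ for a height function $\lambda:U\to\mathbb R$. *)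

theory Defs
  imports "HOL-Analysis.Analysis"
begin

text \<open>Players are indexed by a finite type 'n (n = CARD('n) >= 1), items by a
finite type 'm (m = CARD('m) >= 1). Matrices in R^{n x m} are elements of
real^'m^'n; row i (the bundle / type of player i) is A $ i.\<close>

definition alloc_space :: "(real^'m^'n) set" where
  "alloc_space = {A. (\<forall>i j. A$i$j = 0 \<or> A$i$j = 1) \<and> (\<forall>j. (\<Sum>i\<in>UNIV. A$i$j) = 1)}"

definition affine_maximizer :: "(real^'m^'n \<Rightarrow> real^'m^'n) \<Rightarrow> bool" where
  "affine_maximizer f \<longleftrightarrow>
     (\<exists>(w::'n \<Rightarrow> real) (c::real^'m^'n \<Rightarrow> real).
        (\<forall>i. w i \<noteq> 0) \<and>
        (\<forall>\<theta>. f \<theta> \<in> alloc_space \<and>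
             (\<forall>B\<in>alloc_space.
                c B + (\<Sum>i\<in>UNIV. w i * (\<theta>$i \<bullet> B$i))
                  \<le> c (f \<theta>) + (\<Sum>i\<in>UNIV. w i * (\<theta>$i \<bullet> f \<theta> $ i)))))"

definition difference_set :: "(real^'m^'n \<Rightarrow> real^'m^'n) \<Rightarrow> real^'m^'n \<Rightarrow> (real^'m^'n) set" where
  "difference_set f A = closure {\<theta>. f \<theta> = A}"

definition indifference_complex :: "(real^'m^'n \<Rightarrow> real^'m^'n) \<Rightarrow> (real^'m^'n) set set" where
  "indifference_complex f =
     {S. S \<subseteq> alloc_space \<and> (\<Inter>A\<in>S. difference_set f A) \<noteq> {}}"

definition simplicial_complex_on :: "'a set \<Rightarrow> 'a set set \<Rightarrow> bool" where
  "simplicial_complex_on V K \<longleftrightarrow>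
     K \<subseteq> Pow V \<and> (\<forall>F\<in>K. \<forall>G. G \<subseteq> F \<longrightarrow> G \<in> K) \<and> (\<forall>v\<in>V. {v} \<in> K)"

definition facets :: "'a set set \<Rightarrow> 'a set set" where
  "facets K = {F\<in>K. \<not> (\<exists>G\<in>K. F \<subset> G)}"

definition lifted_points :: "'a::euclidean_space set \<Rightarrow> ('a \<Rightarrow> real) \<Rightarrow> ('a \<times> real) set" where
  "lifted_points U h = (\<lambda>u. (u, h u)) ` U"

definition upper_faces :: "'a::euclidean_space set \<Rightarrow> ('a \<Rightarrow> real) \<Rightarrow> ('a \<times> real) set set" where
  "upper_faces U h =
     {F. \<exists>\<nu>::'a \<times> real. snd \<nu> > 0 \<and>
          F = {x \<in> convex hull (lifted_points U h).
                 \<forall>y \<in> convex hull (lifted_points U h). \<nu> \<bullet> y \<le> \<nu> \<bullet> x}}"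

definition regular_subdivision :: "'a::euclidean_space set \<Rightarrow> ('a \<Rightarrow> real) \<Rightarrow> 'a set set" where
  "regular_subdivision U h = (\<lambda>F. fst ` F) ` upper_faces U h"

definition maximal_cells :: "'a set set \<Rightarrow> 'a set set" where
  "maximal_cells S = {C\<in>S. \<not> (\<exists>C'\<in>S. C \<subset> C')}"

definition vertex_set :: "'a::real_vector set \<Rightarrow> 'a set" where
  "vertex_set C = {v. v extreme_point_of C}"

end

theory Submission
  imports Defs
begin

text \<open>Lifting the allocations by heights h, the upper face with outer normal (\<theta>, 1)
projects onto the convex hull of the allocations maximizing h A + \<theta> \<bullet> A, so the cells
of the regular subdivision are exactly the hulls of the argmax sets of the affine
maximizer with allocation weights h and unit player weights. Since every allocation
is a 0/1 point of constant norm, each one is a vertex of the hull of any set of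
allocations containing it, so passing between cells and their vertex sets is an order
isomorphism. On the other side, the difference set of A is the closure of the region
where A is chosen, which is the closed region where A is an argmax: at such a \<theta>,
perturbing the player types slightly in the direction of A makes A the unique
maximizer. Hence the indifference complex of an affine maximizer is the down-closure
of its argmax sets, and its facets are the maximal argmax sets.\<close>

subsection \<open>The allocation space\<close>

lemma alloc_space_finite: "finite (alloc_space :: (real^'m^'n) set)"
proof -
  let ?g = "\<lambda>s::('n\<times>'m) set. (\<chi> i j. if (i,j) \<in> s then 1 else 0) :: real^'m^'n"
  have "alloc_space \<subseteq> ?g ` Pow UNIV"
  proof
    fix A :: "real^'m^'n" assume "A \<in> alloc_space"
    hence "A = ?g {(i,j). A$i$j = 1}"
      unfolding alloc_space_def by (auto simp: vec_eq_iff)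
    thus "A \<in> ?g ` Pow UNIV" by blast
  qed
  thus ?thesis by (rule finite_subset) simp
qed

lemma alloc_space_nonempty: "(alloc_space :: (real^'m^'n) set) \<noteq> {}"
proof -
  have "((\<chi> i j. if i = undefined then 1 else 0) :: real^'m^'n) \<in> alloc_space"
    unfolding alloc_space_def by auto
  thus ?thesis by blast
qed

lemma inner_self_alloc:
  assumes "(A::real^'m^'n) \<in> alloc_space"
  shows "A \<bullet> A = real CARD('m)"
proof -
  have idem: "\<And>i j. A$i$j * A$i$j = A$i$j" using assms unfolding alloc_space_def by auto
  have "A \<bullet> A = (\<Sum>i\<in>UNIV. \<Sum>j\<in>UNIV. A$i$j * A$i$j)" by (simp add: inner_vec_def)
  also have "\<dots> = (\<Sum>i\<in>UNIV. \<Sum>j\<in>UNIV. A$i$j)" by (simp add: idem)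
  also have "\<dots> = (\<Sum>j\<in>UNIV. \<Sum>i\<in>UNIV. A$i$j)" by (rule sum.swap)
  also have "\<dots> = (\<Sum>j\<in>(UNIV::'m set). 1)" using assms unfolding alloc_space_def by simp
  finally show ?thesis by simp
qed

lemma inner_alloc_less:
  assumes "(A::real^'m^'n) \<in> alloc_space" "B \<in> alloc_space" "A \<noteq> B"
  shows "A \<bullet> B < A \<bullet> A"
proof -
  have "0 < (A - B) \<bullet> (A - B)" using assms(3) by simp
  also have "(A - B) \<bullet> (A - B) = A \<bullet> A - 2 * (A \<bullet> B) + B \<bullet> B"
    by (simp add: inner_diff_left inner_diff_right inner_commute)
  finally show ?thesis using inner_self_alloc[OF assms(1)] inner_self_alloc[OF assms(2)] by simp
qed

lemma alloc_notin_convex_hull: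
  assumes "T \<subseteq> alloc_space" "(A::real^'m^'n) \<in> alloc_space" "A \<notin> T"
  shows "A \<notin> convex hull T"
proof -
  have "convex hull T \<subseteq> {y. A \<bullet> y < A \<bullet> A}"
    by (rule hull_minimal) (use assms inner_alloc_less in \<open>auto simp: convex_halfspace_lt\<close>)
  thus ?thesis by auto
qed

lemma vertex_set_convex_hull_alloc:
  assumes "T \<subseteq> (alloc_space::(real^'m^'n) set)"
  shows "vertex_set (convex hull T) = T"
proof
  show "vertex_set (convex hull T) \<subseteq> T"
    unfolding vertex_set_def using extreme_point_of_convex_hull by auto
  show "T \<subseteq> vertex_set (convex hull T)"
  proof
    fix A assume A: "A \<in> T"
    have "finite (T - {A})" using assms alloc_space_finite finite_subset by blast
    moreover have "A \<notin> convex hull (T - {A})" using assms A by (intro alloc_notin_convex_hull) auto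
    ultimately have "A extreme_point_of convex hull (insert A (T - {A}))"
      using extreme_point_of_convex_hull_insert by blast
    thus "A \<in> vertex_set (convex hull T)" using A unfolding vertex_set_def by (simp add: insert_absorb)
  qed
qed

lemma convex_hull_Int_alloc_space:
  assumes "T \<subseteq> (alloc_space::(real^'m^'n) set)"
  shows "convex hull T \<inter> alloc_space = T"
  using assms alloc_notin_convex_hull[OF assms] hull_subset[of T convex] by blast

lemma convex_hull_alloc_psubset_iff:
  assumes "T \<subseteq> (alloc_space::(real^'m^'n) set)" "T' \<subseteq> alloc_space"
  shows "convex hull T \<subset> convex hull T' \<longleftrightarrow> T \<subset> T'"
  using convex_hull_Int_alloc_space[OF assms(1)] convex_hull_Int_alloc_space[OF assms(2)]
  by (metis Int_mono hull_mono order.refl psubset_eq)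

subsection \<open>Maximizing a linear functional over a convex hull\<close>

lemma finite_obtains_argmax:
  fixes f :: "'a \<Rightarrow> 'b::linorder"
  assumes "finite S" "S \<noteq> {}"
  obtains x where "x \<in> S" "\<And>y. y \<in> S \<Longrightarrow> f y \<le> f x"
proof -
  have "Max (f ` S) \<in> f ` S" using assms by simp
  then obtain x where "x \<in> S" "f x = Max (f ` S)" by (metis imageE)
  thus ?thesis using that assms by simp
qed

lemma convex_combination_in_convex_hull_support:
  fixes L :: "'a::real_vector set"
  assumes "finite L" "L' \<subseteq> L" "\<forall>p\<in>L. 0 \<le> u p" "sum u L = 1" "\<forall>p\<in>L - L'. u p = 0"
  shows "(\<Sum>p\<in>L. u p *\<^sub>R p) \<in> convex hull L'"
proof -
  have "finite L'" using assms finite_subset by blast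
  have "sum u L' = sum u L" "(\<Sum>p\<in>L'. u p *\<^sub>R p) = (\<Sum>p\<in>L. u p *\<^sub>R p)"
    using assms(5) by (auto intro: sum.mono_neutral_left[OF assms(1,2)])
  thus ?thesis
    unfolding convex_hull_finite[OF \<open>finite L'\<close>] using assms by (auto intro!: exI[of _ u])
qed

lemma maximizers_convex_hull:
  fixes L :: "'a::real_inner set"
  assumes fin: "finite L" and ne: "L \<noteq> {}"
  shows "{x \<in> convex hull L. \<forall>y\<in>convex hull L. \<nu> \<bullet> y \<le> \<nu> \<bullet> x}
       = convex hull {p\<in>L. \<forall>q\<in>L. \<nu> \<bullet> q \<le> \<nu> \<bullet> p}"
proof -
  obtain p0 where p0: "p0 \<in> L" "\<And>q. q \<in> L \<Longrightarrow> \<nu> \<bullet> q \<le> \<nu> \<bullet> p0"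
    using finite_obtains_argmax[OF fin ne] by blast
  define m where "m = \<nu> \<bullet> p0"
  have Lm: "{p\<in>L. \<forall>q\<in>L. \<nu> \<bullet> q \<le> \<nu> \<bullet> p} = {p\<in>L. \<nu> \<bullet> p = m}"
    using p0 unfolding m_def by force
  have hull_le: "convex hull L \<subseteq> {y. \<nu> \<bullet> y \<le> m}"
    by (rule hull_minimal) (auto simp: p0 m_def convex_halfspace_le)
  have hull_Lm: "convex hull {p\<in>L. \<nu> \<bullet> p = m} \<subseteq> {y. \<nu> \<bullet> y = m}"
    by (rule hull_minimal) (auto simp: convex_hyperplane)
  have key: "x \<in> convex hull {p\<in>L. \<nu> \<bullet> p = m}" if x: "x \<in> convex hull L" "\<nu> \<bullet> x = m" for x
  proof -
    obtain u where u: "\<forall>p\<in>L. 0 \<le> u p" "sum u L = 1" "(\<Sum>p\<in>L. u p *\<^sub>R p) = x"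
      using x(1) unfolding convex_hull_finite[OF fin] by blast
    have "(\<Sum>p\<in>L. u p * (m - \<nu> \<bullet> p)) = m * sum u L - \<nu> \<bullet> x"
      unfolding u(3)[symmetric]
      by (simp add: right_diff_distrib sum_subtractf sum_distrib_left inner_sum_right mult.commute)
    hence "(\<Sum>p\<in>L. u p * (m - \<nu> \<bullet> p)) = 0" using u(2) x(2) by simp
    moreover have "\<forall>p\<in>L. 0 \<le> u p * (m - \<nu> \<bullet> p)" using u(1) p0(2) m_def by simp
    ultimately have "\<forall>p\<in>L. u p * (m - \<nu> \<bullet> p) = 0"
      using sum_nonneg_eq_0_iff[OF fin, of "\<lambda>p. u p * (m - \<nu> \<bullet> p)"] by simp
    hence "\<forall>p\<in>L - {p\<in>L. \<nu> \<bullet> p = m}. u p = 0" by auto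
    hence "(\<Sum>p\<in>L. u p *\<^sub>R p) \<in> convex hull {p\<in>L. \<nu> \<bullet> p = m}"
      by (intro convex_combination_in_convex_hull_support[OF fin _ u(1,2)]) auto
    thus ?thesis using u(3) by simp
  qed
  show ?thesis unfolding Lm
  proof (intro equalityI subsetI)
    fix x assume "x \<in> {x \<in> convex hull L. \<forall>y\<in>convex hull L. \<nu> \<bullet> y \<le> \<nu> \<bullet> x}"
    hence x: "x \<in> convex hull L" "\<nu> \<bullet> p0 \<le> \<nu> \<bullet> x" using hull_inc[OF p0(1)] by auto
    hence "\<nu> \<bullet> x = m" using hull_le unfolding m_def by fastforce
    with x(1) show "x \<in> convex hull {p\<in>L. \<nu> \<bullet> p = m}" by (rule key)
  next
    fix x assume x: "x \<in> convex hull {p\<in>L. \<nu> \<bullet> p = m}"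
    hence "x \<in> convex hull L" using hull_mono[of "{p\<in>L. \<nu> \<bullet> p = m}" L] by blast
    moreover have "\<nu> \<bullet> x = m" using x hull_Lm by blast
    ultimately show "x \<in> {x \<in> convex hull L. \<forall>y\<in>convex hull L. \<nu> \<bullet> y \<le> \<nu> \<bullet> x}"
      using hull_le by auto
  qed
qed

subsection \<open>Maximal sets and down-closures\<close>

lemma maximal_cells_image:
  assumes "\<And>A B. A \<in> \<F> \<Longrightarrow> B \<in> \<F> \<Longrightarrow> g A \<subset> g B \<longleftrightarrow> A \<subset> B"
  shows "maximal_cells (g ` \<F>) = g ` maximal_cells \<F>"
proof -
  have "(\<forall>C'\<in>g ` \<F>. \<not> g A \<subset> C') \<longleftrightarrow> (\<forall>B\<in>\<F>. \<not> A \<subset> B)" if "A \<in> \<F>" for A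
    using assms[OF that] by simp
  thus ?thesis unfolding maximal_cells_def by auto
qed

definition down_closure :: "'a set set \<Rightarrow> 'a set set" where
  "down_closure \<F> = {S. \<exists>T\<in>\<F>. S \<subseteq> T}"

lemma facets_down_closure: "facets (down_closure \<F>) = maximal_cells \<F>"
  unfolding facets_def maximal_cells_def down_closure_def by blast

lemma down_closure_maximal_cells:
  assumes "finite \<F>"
  shows "down_closure (maximal_cells \<F>) = down_closure \<F>"
proof (intro set_eqI iffI)
  fix S assume "S \<in> down_closure \<F>"
  then obtain T0 where T0: "T0 \<in> \<F>" "S \<subseteq> T0" unfolding down_closure_def by blast
  obtain T where "T \<in> \<F>" "T0 \<subseteq> T" "\<forall>T'\<in>\<F>. T \<subseteq> T' \<longrightarrow> T = T'"
    using finite_has_maximal2[OF assms T0(1)] by blast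
  hence "T \<in> maximal_cells \<F>" "S \<subseteq> T" using T0(2) unfolding maximal_cells_def by auto
  thus "S \<in> down_closure (maximal_cells \<F>)" unfolding down_closure_def by blast
qed (auto simp: down_closure_def maximal_cells_def)

lemma down_closure_facets:
  assumes "finite K" "\<forall>F\<in>K. \<forall>G. G \<subseteq> F \<longrightarrow> G \<in> K"
  shows "down_closure (facets K) = K"
proof -
  have "facets K = maximal_cells K" unfolding facets_def maximal_cells_def ..
  moreover have "down_closure K = K" using assms(2) unfolding down_closure_def by blast
  ultimately show ?thesis using down_closure_maximal_cells[OF assms(1)] by simp
qed

lemma simplicial_complex_eq_down_closure:
  assumes "finite V" "simplicial_complex_on V K" "facets K = maximal_cells \<F>" "finite \<F>"
  shows "K = down_closure \<F>"
proof -
  have "K \<subseteq> Pow V" and down_closed: "\<forall>F\<in>K. \<forall>G. G \<subseteq> F \<longrightarrow> G \<in> K"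
    using assms(2) unfolding simplicial_complex_on_def by auto
  hence "finite K" using assms(1) finite_subset by (metis finite_Pow_iff)
  hence "K = down_closure (facets K)" by (rule down_closure_facets[OF _ down_closed, symmetric])
  thus ?thesis unfolding assms(3) down_closure_maximal_cells[OF assms(4)] .
qed

subsection \<open>Cells of a regular subdivision of the allocation space\<close>

definition optimal_allocs :: "(real^'m^'n \<Rightarrow> real) \<Rightarrow> real^'m^'n \<Rightarrow> (real^'m^'n) set" where
  "optimal_allocs c \<theta> = {A \<in> alloc_space. \<forall>B\<in>alloc_space. c B + \<theta> \<bullet> B \<le> c A + \<theta> \<bullet> A}"

lemma optimal_allocs_subset: "optimal_allocs c \<theta> \<subseteq> alloc_space"
  unfolding optimal_allocs_def by auto

lemma optimal_allocs_nonempty: "optimal_allocs c \<theta> \<noteq> {}"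
proof -
  obtain A where "A \<in> alloc_space" "\<And>B. B \<in> alloc_space \<Longrightarrow> c B + \<theta> \<bullet> B \<le> c A + \<theta> \<bullet> A"
    using finite_obtains_argmax[OF alloc_space_finite alloc_space_nonempty, of "\<lambda>A. c A + \<theta> \<bullet> A"]
    by blast
  thus ?thesis unfolding optimal_allocs_def by blast
qed

lemma fst_convex_hull_lifted_points:
  "fst ` (convex hull (lifted_points S h)) = convex hull S"
  by (simp add: lifted_points_def convex_hull_linear_image[OF linear_fst] image_image)

lemma upper_face_alloc_space:
  fixes a :: "real^'m^'n"
  assumes t: "t > 0"
  shows "{x \<in> convex hull (lifted_points alloc_space h).
            \<forall>y\<in>convex hull (lifted_points alloc_space h). (a,t) \<bullet> y \<le> (a,t) \<bullet> x}
         = convex hull (lifted_points (optimal_allocs h ((1/t) *\<^sub>R a)) h)"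
proof -
  have lift: "(a,t) \<bullet> (B, h B) = t * (h B + ((1/t) *\<^sub>R a) \<bullet> B)" for B
    using t by (simp add: field_simps)
  have "(a,t) \<bullet> (B, h B) \<le> (a,t) \<bullet> (A, h A) \<longleftrightarrow> h B + ((1/t) *\<^sub>R a) \<bullet> B \<le> h A + ((1/t) *\<^sub>R a) \<bullet> A"
    for A B
    unfolding lift using t by simp
  hence top: "{p \<in> lifted_points alloc_space h. \<forall>q\<in>lifted_points alloc_space h. (a,t) \<bullet> q \<le> (a,t) \<bullet> p}
        = lifted_points (optimal_allocs h ((1/t) *\<^sub>R a)) h"
    unfolding lifted_points_def optimal_allocs_def by auto
  have "finite (lifted_points (alloc_space::(real^'m^'n) set) h)"
    unfolding lifted_points_def by (intro finite_imageI alloc_space_finite)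
  moreover have "lifted_points (alloc_space::(real^'m^'n) set) h \<noteq> {}"
    unfolding lifted_points_def using alloc_space_nonempty by simp
  ultimately show ?thesis unfolding top[symmetric] by (rule maximizers_convex_hull)
qed

lemma upper_faces_alloc_space:
  "upper_faces (alloc_space::(real^'m^'n) set) h
     = range (\<lambda>\<theta>. convex hull (lifted_points (optimal_allocs h \<theta>) h))"
proof (intro set_eqI iffI)
  fix F assume "F \<in> upper_faces (alloc_space::(real^'m^'n) set) h"
  then obtain a t where "t > 0" and F: "F = {x \<in> convex hull (lifted_points alloc_space h).
                 \<forall>y \<in> convex hull (lifted_points alloc_space h). (a,t) \<bullet> y \<le> (a,t) \<bullet> x}"
    unfolding upper_faces_def by force
  thus "F \<in> range (\<lambda>\<theta>. convex hull (lifted_points (optimal_allocs h \<theta>) h))"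
    using upper_face_alloc_space by blast
next
  fix F assume "F \<in> range (\<lambda>\<theta>. convex hull (lifted_points (optimal_allocs h \<theta>) h))"
  then obtain \<theta> :: "real^'m^'n" where "F = convex hull (lifted_points (optimal_allocs h \<theta>) h)"
    by blast
  thus "F \<in> upper_faces alloc_space h"
    unfolding upper_faces_def using upper_face_alloc_space[where t=1 and a=\<theta> and h=h]
    by (intro CollectI exI[of _ "(\<theta>, 1::real)"]) simp
qed

lemma regular_subdivision_alloc_space:
  "regular_subdivision (alloc_space::(real^'m^'n) set) h
     = (\<lambda>T. convex hull T) ` range (optimal_allocs h)"
  unfolding regular_subdivision_def upper_faces_alloc_space
  by (simp add: image_image fst_convex_hull_lifted_points)

lemma vertex_sets_maximal_cells_regular_subdivision:
  "vertex_set ` maximal_cells (regular_subdivision (alloc_space::(real^'m^'n) set) h)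
     = maximal_cells (range (optimal_allocs h))"
proof -
  have "convex hull A \<subset> convex hull B \<longleftrightarrow> A \<subset> B"
    if "A \<in> range (optimal_allocs h)" "B \<in> range (optimal_allocs h)" for A B
  proof -
    from that obtain \<theta> \<theta>' where "A = optimal_allocs h \<theta>" "B = optimal_allocs h \<theta>'" by blast
    thus ?thesis by (simp add: convex_hull_alloc_psubset_iff optimal_allocs_subset)
  qed
  hence "maximal_cells (regular_subdivision (alloc_space::(real^'m^'n) set) h)
          = (\<lambda>T. convex hull T) ` maximal_cells (range (optimal_allocs h))"
    unfolding regular_subdivision_alloc_space by (rule maximal_cells_image)
  moreover have "vertex_set (convex hull T) = T" if "T \<in> maximal_cells (range (optimal_allocs h))" for T
  proof -
    from that obtain \<theta> where "T = optimal_allocs h \<theta>" unfolding maximal_cells_def by blast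
    thus ?thesis by (simp add: vertex_set_convex_hull_alloc optimal_allocs_subset)
  qed
  ultimately show ?thesis by (simp add: image_image)
qed

subsection \<open>The indifference complex of an affine maximizer\<close>

definition row_scale :: "('n \<Rightarrow> real) \<Rightarrow> real^'m^'n \<Rightarrow> real^'m^'n" where
  "row_scale w \<theta> = (\<chi> i. w i *\<^sub>R \<theta>$i)"

lemma weighted_sum_eq_inner_row_scale:
  "(\<Sum>i\<in>UNIV. w i * (\<theta>$i \<bullet> B$i)) = row_scale w \<theta> \<bullet> (B::real^'m^'n)"
  by (simp add: row_scale_def inner_vec_def sum_distrib_left ac_simps)

lemma inner_row_scale_commute: "row_scale w \<theta> \<bullet> B = \<theta> \<bullet> row_scale w (B::real^'m^'n)"
  by (simp add: row_scale_def inner_vec_def sum_distrib_left ac_simps)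

lemma row_scale_inverse: "\<forall>i. w i \<noteq> 0 \<Longrightarrow> row_scale w (row_scale (\<lambda>i. 1 / w i) \<theta>) = \<theta>"
  by (simp add: row_scale_def vec_eq_iff)

lemma row_scale_add_scaleR:
  "row_scale w (\<theta> + e *\<^sub>R D) = row_scale w \<theta> + e *\<^sub>R row_scale w D"
  by (simp add: row_scale_def vec_eq_iff algebra_simps)

lemma row_scale_one: "row_scale (\<lambda>_. 1) \<theta> = \<theta>"
  by (simp add: row_scale_def vec_eq_iff)

lemma affine_maximizer_iff:
  "affine_maximizer f \<longleftrightarrow>
     (\<exists>w c. (\<forall>i. w i \<noteq> 0) \<and> (\<forall>\<theta>. f \<theta> \<in> optimal_allocs c (row_scale w \<theta>)))"
  unfolding affine_maximizer_def optimal_allocs_def weighted_sum_eq_inner_row_scale by blast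

lemma optimal_allocs_perturb:
  assumes A: "A \<in> optimal_allocs c \<theta>" and e: "e > 0"
  shows "optimal_allocs c (\<theta> + e *\<^sub>R A) = {A}"
proof -
  have "B = A" if B: "B \<in> optimal_allocs c (\<theta> + e *\<^sub>R A)" for B
  proof (rule ccontr)
    assume "B \<noteq> A"
    have alloc: "A \<in> alloc_space" "B \<in> alloc_space"
      using A B optimal_allocs_subset by blast+
    hence "e * (A \<bullet> B) < e * (A \<bullet> A)" using inner_alloc_less[of A B] \<open>B \<noteq> A\<close> e by simp
    moreover have "c B + \<theta> \<bullet> B \<le> c A + \<theta> \<bullet> A" using A alloc unfolding optimal_allocs_def by blast
    moreover have "c A + (\<theta> + e *\<^sub>R A) \<bullet> A \<le> c B + (\<theta> + e *\<^sub>R A) \<bullet> B"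
      using B alloc unfolding optimal_allocs_def by blast
    ultimately show False by (simp add: inner_add_left inner_commute[of B A])
  qed
  moreover have "A \<in> optimal_allocs c (\<theta> + e *\<^sub>R A)"
  proof -
    have alloc_A: "A \<in> alloc_space" using A optimal_allocs_subset by blast
    have "c B + (\<theta> + e *\<^sub>R A) \<bullet> B \<le> c A + (\<theta> + e *\<^sub>R A) \<bullet> A" if B: "B \<in> alloc_space" for B
    proof -
      have "c B + \<theta> \<bullet> B \<le> c A + \<theta> \<bullet> A" using A B unfolding optimal_allocs_def by blast
      moreover have "A \<bullet> B \<le> A \<bullet> A"
        using inner_alloc_less[OF alloc_A B] by (cases "B = A") auto
      hence "e * (A \<bullet> B) \<le> e * (A \<bullet> A)" using e by simp
      ultimately show ?thesis by (simp add: inner_add_left inner_commute[of B A])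
    qed
    thus ?thesis using alloc_A unfolding optimal_allocs_def by blast
  qed
  ultimately show ?thesis by blast
qed

lemma closed_optimal_region:
  "closed {\<theta>. A \<in> optimal_allocs c (row_scale w \<theta>)}"
proof -
  have "{\<theta>. A \<in> optimal_allocs c (row_scale w \<theta>)} = (if A \<in> alloc_space then
          \<Inter>B\<in>alloc_space. {\<theta>. c B + \<theta> \<bullet> row_scale w B \<le> c A + \<theta> \<bullet> row_scale w A} else {})"
    unfolding optimal_allocs_def inner_row_scale_commute by auto
  thus ?thesis
    by (simp add: closed_INT closed_Collect_le continuous_intros)
qed

lemma difference_set_affine_maximizer:
  assumes w: "\<forall>i. w i \<noteq> 0" and f: "\<forall>\<theta>. f \<theta> \<in> optimal_allocs c (row_scale w \<theta>)"
  shows "difference_set f A = {\<theta>. A \<in> optimal_allocs c (row_scale w \<theta>)}"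
proof
  show "difference_set f A \<subseteq> {\<theta>. A \<in> optimal_allocs c (row_scale w \<theta>)}"
    unfolding difference_set_def using f by (intro closure_minimal closed_optimal_region) auto
  show "{\<theta>. A \<in> optimal_allocs c (row_scale w \<theta>)} \<subseteq> difference_set f A"
  proof
    fix \<theta> assume "\<theta> \<in> {\<theta>. A \<in> optimal_allocs c (row_scale w \<theta>)}"
    hence A: "A \<in> optimal_allocs c (row_scale w \<theta>)" by simp
    define D where "D = row_scale (\<lambda>i. 1 / w i) A"
    define \<theta>s where "\<theta>s n = \<theta> + inverse (real (Suc n)) *\<^sub>R D" for n
    have "f (\<theta>s n) = A" for n
    proof -
      have "row_scale w (\<theta>s n) = row_scale w \<theta> + inverse (real (Suc n)) *\<^sub>R A"
        unfolding \<theta>s_def D_def row_scale_add_scaleR row_scale_inverse[OF w] ..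
      hence "optimal_allocs c (row_scale w (\<theta>s n)) = {A}"
        using optimal_allocs_perturb[OF A, of "inverse (real (Suc n))"] by simp
      thus ?thesis using f by blast
    qed
    moreover have "\<theta>s \<longlonglongrightarrow> \<theta>"
      unfolding \<theta>s_def using tendsto_add[OF tendsto_const tendsto_scaleR[OF LIMSEQ_inverse_real_of_nat tendsto_const]]
      by simp
    ultimately show "\<theta> \<in> difference_set f A"
      unfolding difference_set_def closure_sequential by blast
  qed
qed

lemma indifference_complex_affine_maximizer:
  assumes w: "\<forall>i. w i \<noteq> 0" and f: "\<forall>\<theta>. f \<theta> \<in> optimal_allocs c (row_scale w \<theta>)"
  shows "indifference_complex f = down_closure (range (optimal_allocs c))"
proof (intro set_eqI iffI)
  fix S assume "S \<in> indifference_complex f"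
  then obtain \<theta> where "\<theta> \<in> (\<Inter>A\<in>S. difference_set f A)"
    unfolding indifference_complex_def by blast
  hence "S \<subseteq> optimal_allocs c (row_scale w \<theta>)"
    by (simp add: difference_set_affine_maximizer[OF w f] subset_iff)
  thus "S \<in> down_closure (range (optimal_allocs c))" unfolding down_closure_def by blast
next
  fix S assume "S \<in> down_closure (range (optimal_allocs c))"
  then obtain \<theta> where S: "S \<subseteq> optimal_allocs c \<theta>" unfolding down_closure_def by blast
  hence "row_scale (\<lambda>i. 1 / w i) \<theta> \<in> (\<Inter>A\<in>S. difference_set f A)"
    by (simp add: difference_set_affine_maximizer[OF w f] row_scale_inverse[OF w] subset_iff)
  moreover have "S \<subseteq> alloc_space" using S optimal_allocs_subset by blast
  ultimately show "S \<in> indifference_complex f"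
    unfolding indifference_complex_def by blast
qed

lemma facets_indifference_complex_affine_maximizer:
  assumes "affine_maximizer f"
  obtains c where "facets (indifference_complex f)
                     = vertex_set ` maximal_cells (regular_subdivision alloc_space c)"
proof -
  obtain w c where "\<forall>i. w i \<noteq> 0" "\<forall>\<theta>. f \<theta> \<in> optimal_allocs c (row_scale w \<theta>)"
    using assms unfolding affine_maximizer_iff by blast
  hence "facets (indifference_complex f) = vertex_set ` maximal_cells (regular_subdivision alloc_space c)"
    by (simp add: indifference_complex_affine_maximizer facets_down_closure
        vertex_sets_maximal_cells_regular_subdivision)
  thus ?thesis by (rule that)
qed

lemma argmax_selection:
  fixes h :: "real^'m^'n \<Rightarrow> real"
  defines "f \<equiv> \<lambda>\<theta>. SOME A. A \<in> optimal_allocs h \<theta>"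
  shows "affine_maximizer f" and "indifference_complex f = down_closure (range (optimal_allocs h))"
proof -
  have f: "\<forall>\<theta>. f \<theta> \<in> optimal_allocs h (row_scale (\<lambda>_. 1) \<theta>)"
    unfolding f_def row_scale_one by (simp add: some_in_eq optimal_allocs_nonempty)
  show "affine_maximizer f"
    unfolding affine_maximizer_iff using f by (intro exI[of _ "\<lambda>_. 1"] exI[of _ h]) simp
  show "indifference_complex f = down_closure (range (optimal_allocs h))"
    by (rule indifference_complex_affine_maximizer[of "\<lambda>_. 1"]) (simp_all add: f)
qed

lemma finite_range_optimal_allocs: "finite (range (optimal_allocs h))"
proof (rule finite_subset)
  show "range (optimal_allocs h) \<subseteq> Pow alloc_space" using optimal_allocs_subset by blast
qed (simp add: alloc_space_finite)

theorem mainTheorem6: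
  fixes I :: "(real^'m^'n) set set"
  assumes "simplicial_complex_on (alloc_space :: (real^'m^'n) set) I"
  shows "(\<exists>f::real^'m^'n \<Rightarrow> real^'m^'n. affine_maximizer f \<and> I = indifference_complex f)
     \<longleftrightarrow> (\<exists>h::real^'m^'n \<Rightarrow> real.
            \<forall>F. F \<in> facets I \<longleftrightarrow>
                (\<exists>C \<in> maximal_cells (regular_subdivision alloc_space h). F = vertex_set C))"
proof
  assume "\<exists>f::real^'m^'n \<Rightarrow> real^'m^'n. affine_maximizer f \<and> I = indifference_complex f"
  then obtain f where "affine_maximizer f" "I = indifference_complex f" by blast
  then obtain c where "facets I = vertex_set ` maximal_cells (regular_subdivision alloc_space c)"
    using facets_indifference_complex_affine_maximizer by metis
  thus "\<exists>h. \<forall>F. F \<in> facets I \<longleftrightarrow>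
          (\<exists>C \<in> maximal_cells (regular_subdivision alloc_space h). F = vertex_set C)"
    by (intro exI[of _ c] allI) (simp only: image_iff)
next
  assume "\<exists>h. \<forall>F. F \<in> facets I \<longleftrightarrow>
          (\<exists>C \<in> maximal_cells (regular_subdivision (alloc_space :: (real^'m^'n) set) h). F = vertex_set C)"
  then obtain h :: "real^'m^'n \<Rightarrow> real"
    where "\<forall>F. F \<in> facets I \<longleftrightarrow>
            (\<exists>C \<in> maximal_cells (regular_subdivision alloc_space h). F = vertex_set C)" by blast
  hence "facets I = maximal_cells (range (optimal_allocs h))"
    unfolding vertex_sets_maximal_cells_regular_subdivision[symmetric]
    by (intro set_eqI) (simp only: image_iff)
  hence "I = down_closure (range (optimal_allocs h))"
    using simplicial_complex_eq_down_closure[OF alloc_space_finite assms _ finite_range_optimal_allocs]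
    by blast
  thus "\<exists>f::real^'m^'n \<Rightarrow> real^'m^'n. affine_maximizer f \<and> I = indifference_complex f"
    using argmax_selection by metis
qed

end
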